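(* There exist a formula $\phi$ of $\mathcal{D}(\mathsf{M})$, a structure $\mathfrak A$, a team $X$ over $\mathfrak A$ and a set of variables $V$ with $\mathrm{Fr}(\phi)\subseteq V\subseteq\mathrm{dom}(X)$ such that $\mathfrak A\models_{X\upharpoonright V}\phi$ but $\mathfrak A\not\models_X\phi$. That is, the truth of a $\mathcal{D}(\mathsf{M})$-formula in a team may depend on the values of variables that do not occur free in the formula.
   Context: All structures are finite. Dependence logic with majority, $\mathcal{D}(\mathsf{M})[\tau]$: formulas over a vocabulary $\tau$ in negation normal form, built from first-order literals (atomic formulas and negated atomic formulas), dependence atoms $=\!(t_1,\dots,t_n)$ ($t_i$ terms) and their negations $\neg=\!(t_1,\dots,t_n)$, using $\wedge$, $\vee$, $\exists x$, $\forall x$ and $\mathsf{M}x$. $\mathrm{Fr}(\phi)$ denotes the set of free variables, defined as in first-order logic ($\mathsf{M}x$ binds $x$), where the free variables of $=\!(t_1,\dots,t_n)$ are all variables occurring in $t_1,\dots,t_n$. A team $X$ over a structure $\mathfrak A$ with domain $A$ and with finite variable domain $\mathrm{dom}(X)$ is a set of assignments $s:\mathrm{dom}(X)\to A$. For $V\subseteq\mathrm{dom}(X)$, $X\upharpoonright V=\{s\upharpoonright V: s\in X\}$. For $F:X\to A$ let $X(F/x)=\{s(F(s)/x): s\in X\}$ and $X(A/x)=\{s(a/x): s\in X, a\in A\}$, where $s(a/x)$ agrees with $s$ except that it maps $x$ to $a$. Satisfaction $\mathfrak A\models_X\phi$ (for teams whose domain contains the free variables of $\phi$): for a first-order literal,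 every $s\in X$ satisfies it in the usual sense; $\mathfrak A\models_X =\!(t_1,\dots,t_n)$ iff any $s,s'\in X$ giving equal values to $t_1,\dots,t_{n-1}$ give equal values to $t_n$ ($=\!()$ is always true); $\mathfrak A\models_X\neg=\!(t_1,\dots,t_n)$ iff $X=\emptyset$; $\mathfrak A\models_X\psi\wedge\chi$ iff both hold; $\mathfrak A\models_X\psi\vee\chi$ iff $X=Y\cup Z$ with $\mathfrak A\models_Y\psi$ and $\mathfrak A\models_Z\chi$; $\mathfrak A\models_X\exists x\psi$ iff $\mathfrak A\models_{X(F/x)}\psi$ for some $F:X\to A$; $\mathfrak A\models_X\forall x\psi$ iff $\mathfrak A\models_{X(A/x)}\psi$; $\mathfrak A\models_X\mathsf{M}x\psi$ iff for at least $|A|^{|X|}/2$ many functions $F:X\to A$ we have $\mathfrak A\models_{X(F/x)}\psi$. *)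

theory Defs
  imports Main "HOL-Library.FuncSet"
begin

text \<open>Variables, function symbols and relation symbols are named by natural numbers.
  A vocabulary is implicit: a structure interprets every symbol name.\<close>

datatype trm = Var nat | Fn nat "trm list"

datatype fml =
    Eq trm trm
  | NEq trm trm
  | Rel nat "trm list"
  | NRel nat "trm list"
  | Dep "trm list"
  | NDep "trm list"
  | And fml fml
  | Or fml fml
  | Ex nat fml
  | All nat fml
  | Maj nat fml

fun tvars :: "trm \<Rightarrow> nat set" where
  "tvars (Var x) = {x}"
| "tvars (Fn f ts) = (\<Union>t\<in>set ts. tvars t)"

primrec fv :: "fml \<Rightarrow> nat set" where
  "fv (Eq t u) = tvars t \<union> tvars u"
| "fv (NEq t u) = tvars t \<union> tvars u"
| "fv (Rel R ts) = (\<Union>t\<in>set ts. tvars t)"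
| "fv (NRel R ts) = (\<Union>t\<in>set ts. tvars t)"
| "fv (Dep ts) = (\<Union>t\<in>set ts. tvars t)"
| "fv (NDep ts) = (\<Union>t\<in>set ts. tvars t)"
| "fv (And \<phi> \<psi>) = fv \<phi> \<union> fv \<psi>"
| "fv (Or \<phi> \<psi>) = fv \<phi> \<union> fv \<psi>"
| "fv (Ex x \<phi>) = fv \<phi> - {x}"
| "fv (All x \<phi>) = fv \<phi> - {x}"
| "fv (Maj x \<phi>) = fv \<phi> - {x}"

datatype 'a struc = Struc (sdom: "'a set") (sfun: "nat \<Rightarrow> 'a list \<Rightarrow> 'a") (srel: "nat \<Rightarrow> 'a list set")

definition is_struc :: "'a struc \<Rightarrow> bool" where
  "is_struc M \<longleftrightarrow> finite (sdom M) \<and> sdom M \<noteq> {} \<and>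
     (\<forall>f xs. set xs \<subseteq> sdom M \<longrightarrow> sfun M f xs \<in> sdom M)"

type_synonym 'a assign = "nat \<Rightarrow> 'a option"

definition is_team :: "'a struc \<Rightarrow> nat set \<Rightarrow> 'a assign set \<Rightarrow> bool" where
  "is_team M D X \<longleftrightarrow> finite D \<and> (\<forall>s\<in>X. dom s = D \<and> ran s \<subseteq> sdom M)"

definition restr_team :: "'a assign set \<Rightarrow> nat set \<Rightarrow> 'a assign set" where
  "restr_team X V = (\<lambda>s. s |` V) ` X"

fun eval :: "'a struc \<Rightarrow> 'a assign \<Rightarrow> trm \<Rightarrow> 'a" where
  "eval M s (Var x) = the (s x)"
| "eval M s (Fn f ts) = sfun M f (map (eval M s) ts)"

definition dep_holds :: "'a struc \<Rightarrow> trm list \<Rightarrow> 'a assign set \<Rightarrow> bool" where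
  "dep_holds M ts X \<longleftrightarrow> ts = [] \<or>
     (\<forall>s\<in>X. \<forall>s'\<in>X. map (eval M s) (butlast ts) = map (eval M s') (butlast ts)
        \<longrightarrow> eval M s (last ts) = eval M s' (last ts))"

definition supp :: "'a assign set \<Rightarrow> ('a assign \<Rightarrow> 'a) \<Rightarrow> nat \<Rightarrow> 'a assign set" where
  "supp X F x = (\<lambda>s. s(x \<mapsto> F s)) ` X"

definition dupl :: "'a struc \<Rightarrow> 'a assign set \<Rightarrow> nat \<Rightarrow> 'a assign set" where
  "dupl M X x = {s(x \<mapsto> a) | s a. s \<in> X \<and> a \<in> sdom M}"

primrec sat :: "'a struc \<Rightarrow> fml \<Rightarrow> 'a assign set \<Rightarrow> bool" where
  "sat M (Eq t u) X = (\<forall>s\<in>X. eval M s t = eval M s u)"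
| "sat M (NEq t u) X = (\<forall>s\<in>X. eval M s t \<noteq> eval M s u)"
| "sat M (Rel R ts) X = (\<forall>s\<in>X. map (eval M s) ts \<in> srel M R)"
| "sat M (NRel R ts) X = (\<forall>s\<in>X. map (eval M s) ts \<notin> srel M R)"
| "sat M (Dep ts) X = dep_holds M ts X"
| "sat M (NDep ts) X = (X = {})"
| "sat M (And \<phi> \<psi>) X = (sat M \<phi> X \<and> sat M \<psi> X)"
| "sat M (Or \<phi> \<psi>) X = (\<exists>Y Z. X = Y \<union> Z \<and> sat M \<phi> Y \<and> sat M \<psi> Z)"
| "sat M (Ex x \<phi>) X = (\<exists>F \<in> X \<rightarrow>\<^sub>E sdom M. sat M \<phi> (supp X F x))"
| "sat M (All x \<phi>) X = sat M \<phi> (dupl M X x)"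
| "sat M (Maj x \<phi>) X =
     (2 * card {F \<in> X \<rightarrow>\<^sub>E sdom M. sat M \<phi> (supp X F x)} \<ge> card (sdom M) ^ card X)"

end

theory Submission
  imports Defs
begin

text \<open>
  The reason
  is that the majority quantifier counts the choice functions F on the team, and their
  number depends on the size of the team.  Restricting the team to its free variables
  can identify assignments and so make the team smaller.

  We use the sentence  M y (y = c)  with c a constant symbol.  On any team X exactly one
  choice function makes  y = c  true, so the sentence holds iff  |A|^|X| \<le> 2.  Over a
  two-element structure this means |X| \<le> 1.  The two-element team {x \<mapsto> 0, x \<mapsto> 1}
  therefore falsifies the sentence.  Its restriction to the empty set of variables is the
  one-element team {\<emptyset>}, which satisfies it.
\<close>

definition maj_const :: "nat \<Rightarrow> nat \<Rightarrow> fml" where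
  "maj_const y c = Maj y (Eq (Var y) (Fn c []))"

lemma fv_maj_const: "fv (maj_const y c) = {}"
  by (simp add: maj_const_def)

lemma choices_for_const:
  assumes "sfun M c [] \<in> sdom M"
  shows "{F \<in> X \<rightarrow>\<^sub>E sdom M. sat M (Eq (Var y) (Fn c [])) (supp X F y)}
           = {\<lambda>s. if s \<in> X then sfun M c [] else undefined}"
  using assms by (auto simp: supp_def PiE_def extensional_def fun_eq_iff)

lemma sat_maj_const_iff:
  assumes "sfun M c [] \<in> sdom M"
  shows "sat M (maj_const y c) X \<longleftrightarrow> card (sdom M) ^ card X \<le> 2"
  using choices_for_const[OF assms, of X y] by (simp add: maj_const_def)

lemma restr_team_empty_vars:
  assumes "X \<noteq> {}"
  shows "restr_team X {} = {Map.empty}"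
  using assms by (auto simp: restr_team_def)

definition two_struc :: "nat struc" where
  "two_struc = Struc {0, 1} (\<lambda>f xs. 0) (\<lambda>R. {})"

lemma is_struc_two_struc: "is_struc two_struc"
  by (simp add: two_struc_def is_struc_def)

lemma sat_maj_const_two_struc:
  "sat two_struc (maj_const y 0) X \<longleftrightarrow> card X \<le> 1"
proof -
  have "sat two_struc (maj_const y 0) X \<longleftrightarrow> (2::nat) ^ card X \<le> 2"
    by (subst sat_maj_const_iff) (simp_all add: two_struc_def numeral_2_eq_2)
  also have "\<dots> \<longleftrightarrow> card X \<le> 1"
    using power_increasing_iff[of "2::nat" "card X" 1] by simp
  finally show ?thesis .
qed

theorem mainTheorem4:
  shows "\<exists>(M :: nat struc) \<phi> D X V.
           is_struc M \<and> is_team M D X \<and> fv \<phi> \<subseteq> V \<and> V \<subseteq> D \<and>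
           sat M \<phi> (restr_team X V) \<and> \<not> sat M \<phi> X"
proof -
  define X :: "nat assign set" where "X = {[0 \<mapsto> 0], [0 \<mapsto> 1]}"
  have team: "is_team two_struc {0} X"
    by (auto simp: X_def is_team_def two_struc_def)
  have "card X = 2"
    by (simp add: X_def fun_eq_iff)
  then have false_in_X: "\<not> sat two_struc (maj_const 1 0) X"
    by (simp add: sat_maj_const_two_struc)
  have "restr_team X {} = {Map.empty}"
    by (rule restr_team_empty_vars) (simp add: X_def)
  then have true_in_restriction: "sat two_struc (maj_const 1 0) (restr_team X {})"
    by (simp add: sat_maj_const_two_struc)
  show ?thesis
    using is_struc_two_struc team fv_maj_const true_in_restriction false_in_X by blast
qed

end
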